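(* Let $A\in\mathscr{B}(\Omega)$ satisfy $\underline{P}(A)=0$ and $\overline{P}(A)=1$. Then for any $B\in\mathscr{B}(\Omega)$ with $\underline{P}(B)>0$, $$\underline{P}_{\mathfrak{G}}(A\mid B)=0,\quad\overline{P}_{\mathfrak{G}}(A\mid B)=1,\quad \underline{P}_{\mathfrak{B}}(A\mid B)=0,\quad\overline{P}_{\mathfrak{B}}(A\mid B)=1.$$
   Context: $\Omega$ is a separable, completely metrizable space with Borel $\sigma$-algebra $\mathscr{B}(\Omega)$; $\underline{P}$ is a Choquet capacity of order 2 on $\mathscr{B}(\Omega)$ (a coherent lower probability with weakly compact set of dominating measures satisfying $\underline{P}(A\cup B)\ge\underline{P}(A)+\underline{P}(B)-\underline{P}(A\cap B)$); $\Pi=\{P:P\ge\underline{P}\}$, $\underline{P}(A)=\inf_{P\in\Pi}P(A)$, $\overline{P}(A)=\sup_{P\in\Pi}P(A)=1-\underline{P}(A^c)$. Generalized Bayes rule: $\underline{P}_{\mathfrak{B}}(A\mid B)=\inf_{P\in\Pi}P(A\cap B)/P(B)$, $\overline{P}_{\mathfrak{B}}(A\mid B)=\sup_{P\in\Pi}P(A\cap B)/P(B)$. Geometric rule: $\underline{P}_{\mathfrak{G}}(A\mid B)=\inf_{P\in\Pi}P(A\cap B)/\inf_{P\in\Pi}P(B)$, $\overline{P}_{\mathfrak{G}}(A\mid B)=1-\underline{P}_{\mathfrak{G}}(A^c\mid B)$. *)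

theory Defs
  imports "HOL-Probability.Probability"
begin

text \<open>Omega is modelled by a type of class polish_space (separable, complete metric),
  with Borel sigma-algebra sets borel.\<close>

definition prob_borel :: "'a::topological_space measure \<Rightarrow> bool" where
  "prob_borel P \<longleftrightarrow> prob_space P \<and> sets P = sets (borel :: 'a measure)"

definition credal :: "('a::topological_space set \<Rightarrow> real) \<Rightarrow> 'a measure set" where
  "credal lp = {P. prob_borel P \<and> (\<forall>A\<in>sets borel. lp A \<le> measure P A)}"

definition weak_conv :: "(nat \<Rightarrow> 'a::topological_space measure) \<Rightarrow> 'a measure \<Rightarrow> bool" where
  "weak_conv Ps P \<longleftrightarrow> (\<forall>f :: 'a \<Rightarrow> real. continuous_on UNIV f \<and> bounded (range f) \<longrightarrow>
      (\<lambda>n. integral\<^sup>L (Ps n) f) \<longlonglongrightarrow> integral\<^sup>L P f)"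

text \<open>Weak compactness (sequential; the weak topology on probability measures on a Polish space
  is metrizable, so this agrees with compactness).\<close>
definition weakly_seq_compact :: "'a::topological_space measure set \<Rightarrow> bool" where
  "weakly_seq_compact S \<longleftrightarrow> (\<forall>Ps. (\<forall>n. Ps n \<in> S) \<longrightarrow>
      (\<exists>(r::nat \<Rightarrow> nat) P. strict_mono r \<and> P \<in> S \<and> weak_conv (Ps \<circ> r) P))"

definition choquet2 :: "('a::topological_space set \<Rightarrow> real) \<Rightarrow> bool" where
  "choquet2 lp \<longleftrightarrow>
     credal lp \<noteq> {} \<and>
     (\<forall>A\<in>sets borel. lp A = (INF P\<in>credal lp. measure P A)) \<and>
     weakly_seq_compact (credal lp) \<and>
     (\<forall>A\<in>sets borel. \<forall>B\<in>sets borel. lp (A \<union> B) \<ge> lp A + lp B - lp (A \<inter> B))"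

definition upper_prob :: "('a::topological_space set \<Rightarrow> real) \<Rightarrow> 'a set \<Rightarrow> real" where
  "upper_prob lp A = (SUP P\<in>credal lp. measure P A)"

definition lower_bayes :: "('a::topological_space set \<Rightarrow> real) \<Rightarrow> 'a set \<Rightarrow> 'a set \<Rightarrow> real" where
  "lower_bayes lp A B = (INF P\<in>credal lp. measure P (A \<inter> B) / measure P B)"

definition upper_bayes :: "('a::topological_space set \<Rightarrow> real) \<Rightarrow> 'a set \<Rightarrow> 'a set \<Rightarrow> real" where
  "upper_bayes lp A B = (SUP P\<in>credal lp. measure P (A \<inter> B) / measure P B)"

definition lower_geom :: "('a::topological_space set \<Rightarrow> real) \<Rightarrow> 'a set \<Rightarrow> 'a set \<Rightarrow> real" where
  "lower_geom lp A B = (INF P\<in>credal lp. measure P (A \<inter> B)) / (INF P\<in>credal lp. measure P B)"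

definition upper_geom :: "('a::topological_space set \<Rightarrow> real) \<Rightarrow> 'a set \<Rightarrow> 'a set \<Rightarrow> real" where
  "upper_geom lp A B = 1 - lower_geom lp (- A) B"

end

theory Submission
  imports Defs
begin

text \<open>Since \<open>lp\<close> is the lower envelope of its credal set, \<open>lp A = 0\<close> and
  \<open>upper_prob lp A = 1\<close> provide credal measures giving \<open>A\<close>, respectively its complement,
  arbitrarily small mass. Every credal measure gives \<open>B\<close> mass at least \<open>lp B > 0\<close>, hence
  \<open>P(A \<inter> B) / P(B) \<le> P(A) / lp B\<close>, and these masses stay small after conditioning on \<open>B\<close>.\<close>

lemma cINF_eq_if_approx:
  fixes f :: "'b \<Rightarrow> real"
  assumes "S \<noteq> {}" "\<And>x. x \<in> S \<Longrightarrow> a \<le> f x" "\<And>e. e > 0 \<Longrightarrow> \<exists>x\<in>S. f x < a + e"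
  shows "(INF x\<in>S. f x) = a"
proof (rule antisym)
  show "a \<le> (INF x\<in>S. f x)"
    using assms(1,2) by (rule cINF_greatest)
  show "(INF x\<in>S. f x) \<le> a"
  proof (rule field_le_epsilon)
    fix e :: real assume "e > 0"
    then obtain x where "x \<in> S" "f x < a + e" using assms(3) by blast
    moreover have "bdd_below (f ` S)" using assms(2) by (intro bdd_belowI2)
    ultimately show "(INF x\<in>S. f x) \<le> a + e" by (meson cINF_lower less_imp_le order_trans)
  qed
qed

lemma cSUP_eq_if_approx:
  fixes f :: "'b \<Rightarrow> real"
  assumes "S \<noteq> {}" "\<And>x. x \<in> S \<Longrightarrow> f x \<le> a" "\<And>e. e > 0 \<Longrightarrow> \<exists>x\<in>S. a - e < f x"
  shows "(SUP x\<in>S. f x) = a"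
proof -
  have "(INF x\<in>S. - f x) = - a"
    using assms by (intro cINF_eq_if_approx) (auto, metis minus_diff_eq neg_less_iff_less)
  then show ?thesis by (simp add: Inf_real_def image_image)
qed

lemma credal_prob_space: "P \<in> credal lp \<Longrightarrow> prob_space P"
  by (simp add: credal_def prob_borel_def)

lemma sets_credal: "P \<in> credal lp \<Longrightarrow> sets P = sets borel"
  by (simp add: credal_def prob_borel_def)

lemma credal_lower_le_measure: "P \<in> credal lp \<Longrightarrow> X \<in> sets borel \<Longrightarrow> lp X \<le> measure P X"
  by (simp add: credal_def)

lemma credal_measure_le_1: "P \<in> credal lp \<Longrightarrow> measure P X \<le> 1"
  by (simp add: credal_prob_space prob_space.prob_le_1)

lemma credal_measure_mono:
  "P \<in> credal lp \<Longrightarrow> X \<subseteq> Y \<Longrightarrow> Y \<in> sets borel \<Longrightarrow> measure P X \<le> measure P Y"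
  by (metis credal_prob_space finite_measure.finite_measure_mono prob_space_def sets_credal)

lemma credal_measure_compl:
  assumes "P \<in> credal lp" "X \<in> sets borel"
  shows "measure P (- X) = 1 - measure P X"
proof -
  have "space P = UNIV" using sets_eq_imp_space_eq[OF sets_credal[OF assms(1)]] by simp
  then show ?thesis
    using prob_space.prob_compl[OF credal_prob_space[OF assms(1)], of X] assms(2)
      sets_credal[OF assms(1)]
    by (simp add: Compl_eq_Diff_UNIV)
qed

lemma credal_measure_Int_compl:
  assumes "P \<in> credal lp" "X \<in> sets borel" "B \<in> sets borel"
  shows "measure P (- X \<inter> B) = measure P B - measure P (X \<inter> B)"
proof -
  have "- X \<inter> B = B - X \<inter> B" by blast
  then show ?thesis
    using assms sets_credal[OF assms(1)] credal_prob_space[OF assms(1)]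
    by (simp add: finite_measure.finite_measure_Diff prob_space_def)
qed

lemma credal_cond_le:
  assumes "P \<in> credal lp" "X \<in> sets borel" "B \<in> sets borel" "lp B > 0"
  shows "measure P (X \<inter> B) / measure P B \<le> measure P X / lp B"
  using assms credal_lower_le_measure[OF assms(1,3)] credal_measure_mono[OF assms(1) _ assms(2)]
  by (intro frac_le) auto

lemma choquet2_credal_nonempty: "choquet2 lp \<Longrightarrow> credal lp \<noteq> {}"
  by (simp add: choquet2_def)

lemma choquet2_exists_credal_less:
  assumes "choquet2 lp" "X \<in> sets borel" "lp X = 0" "e > 0"
  shows "\<exists>P\<in>credal lp. measure P X < e"
proof -
  have "(INF P\<in>credal lp. measure P X) < e"
    using assms unfolding choquet2_def by simp
  moreover have "bdd_below ((\<lambda>P. measure P X) ` credal lp)"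
    by (intro bdd_belowI2[where m = 0]) simp
  ultimately show ?thesis
    by (simp add: cINF_less_iff choquet2_credal_nonempty[OF assms(1)])
qed

lemma choquet2_lower_compl_eq_0:
  assumes "choquet2 lp" "A \<in> sets borel" "upper_prob lp A = 1"
  shows "lp (- A) = 0"
proof -
  have "lp (- A) = (INF P\<in>credal lp. measure P (- A))"
    using assms(1,2) unfolding choquet2_def by simp
  also have "\<dots> = 0"
  proof (rule cINF_eq_if_approx)
    fix e :: real assume "e > 0"
    have "bdd_above ((\<lambda>P. measure P A) ` credal lp)"
      by (intro bdd_aboveI2) (rule credal_measure_le_1)
    moreover have "1 - e < (SUP P\<in>credal lp. measure P A)"
      using assms(3) \<open>e > 0\<close> by (simp add: upper_prob_def)
    ultimately obtain P where P: "P \<in> credal lp" "1 - e < measure P A"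
      using less_cSUP_iff[OF choquet2_credal_nonempty[OF assms(1)]] by blast
    then have "measure P (- A) < 0 + e"
      using credal_measure_compl[OF P(1) assms(2)] by simp
    then show "\<exists>P\<in>credal lp. measure P (- A) < 0 + e"
      using P(1) by blast
  qed (simp_all add: choquet2_credal_nonempty[OF assms(1)])
  finally show ?thesis .
qed

lemma lower_geom_eq_0:
  assumes "choquet2 lp" "X \<in> sets borel" "lp X = 0" "B \<in> sets borel"
  shows "lower_geom lp X B = 0"
proof -
  have "(INF P\<in>credal lp. measure P (X \<inter> B)) = 0"
  proof (rule cINF_eq_if_approx)
    fix e :: real assume "e > 0"
    then obtain P where P: "P \<in> credal lp" "measure P X < e"
      using choquet2_exists_credal_less[OF assms(1-3)] by blast
    have "measure P (X \<inter> B) \<le> measure P X"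
      by (rule credal_measure_mono[OF P(1) Int_lower1 assms(2)])
    with P show "\<exists>P\<in>credal lp. measure P (X \<inter> B) < 0 + e"
      by (intro bexI[of _ P]) simp_all
  qed (simp_all add: choquet2_credal_nonempty[OF assms(1)])
  then show ?thesis by (simp add: lower_geom_def)
qed

lemma lower_bayes_eq_0:
  assumes "choquet2 lp" "X \<in> sets borel" "lp X = 0" "B \<in> sets borel" "lp B > 0"
  shows "lower_bayes lp X B = 0"
  unfolding lower_bayes_def
proof (rule cINF_eq_if_approx)
  fix e :: real assume "e > 0"
  then have "e * lp B > 0"
    using assms(5) by simp
  then obtain P where P: "P \<in> credal lp" "measure P X < e * lp B"
    using choquet2_exists_credal_less[OF assms(1-3)] by blast
  have "measure P (X \<inter> B) / measure P B \<le> measure P X / lp B"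
    using credal_cond_le[OF P(1) assms(2,4,5)] .
  also have "\<dots> < e"
    using P(2) assms(5) by (simp add: divide_less_eq)
  finally show "\<exists>P\<in>credal lp. measure P (X \<inter> B) / measure P B < 0 + e"
    using P(1) by (intro bexI[of _ P]) simp_all
qed (simp_all add: choquet2_credal_nonempty[OF assms(1)])

lemma upper_bayes_eq_1:
  assumes "choquet2 lp" "A \<in> sets borel" "lp (- A) = 0" "B \<in> sets borel" "lp B > 0"
  shows "upper_bayes lp A B = 1"
  unfolding upper_bayes_def
proof (rule cSUP_eq_if_approx)
  fix P assume "P \<in> credal lp"
  then have "measure P (A \<inter> B) \<le> measure P B"
    by (rule credal_measure_mono[OF _ Int_lower2 assms(4)])
  then show "measure P (A \<inter> B) / measure P B \<le> 1"
    unfolding divide_le_eq_1 using measure_nonneg[of P B] by linarith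
next
  fix e :: real assume "e > 0"
  then have "e * lp B > 0"
    using assms(5) by simp
  then obtain P where P: "P \<in> credal lp" "measure P (- A) < e * lp B"
    using choquet2_exists_credal_less[OF assms(1) borel_comp[OF assms(2)] assms(3)] by blast
  have "measure P B > 0"
    using credal_lower_le_measure[OF P(1) assms(4)] assms(5) by simp
  then have "1 - measure P (A \<inter> B) / measure P B = measure P (- A \<inter> B) / measure P B"
    using credal_measure_Int_compl[OF P(1) assms(2,4)] by (simp add: field_simps)
  also have "\<dots> \<le> measure P (- A) / lp B"
    using credal_cond_le[OF P(1) _ assms(4,5)] assms(2) by simp
  also have "\<dots> < e"
    using P(2) assms(5) by (simp add: divide_less_eq)
  finally show "\<exists>P\<in>credal lp. 1 - e < measure P (A \<inter> B) / measure P B"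
    using P(1) by (intro bexI[of _ P]) simp_all
qed (simp_all add: choquet2_credal_nonempty[OF assms(1)])

theorem theorem5p8:
  fixes lp :: "'a::polish_space set \<Rightarrow> real" and A B :: "'a set"
  assumes "choquet2 lp"
    and "A \<in> sets borel" and "lp A = 0" and "upper_prob lp A = 1"
    and "B \<in> sets borel" and "lp B > 0"
  shows "lower_geom lp A B = 0 \<and> upper_geom lp A B = 1 \<and>
         lower_bayes lp A B = 0 \<and> upper_bayes lp A B = 1"
proof -
  have compl_null: "lp (- A) = 0"
    using choquet2_lower_compl_eq_0 assms(1,2,4) .
  have "lower_geom lp (- A) B = 0"
    using lower_geom_eq_0[OF assms(1) borel_comp[OF assms(2)] compl_null assms(5)] .
  then show ?thesis
    unfolding upper_geom_def
    using lower_geom_eq_0[OF assms(1-3,5)] lower_bayes_eq_0[OF assms(1-3,5,6)]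
      upper_bayes_eq_1[OF assms(1,2) compl_null assms(5,6)]
    by simp
qed

end
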